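(* If $\sum_{i=1}^M b_i<1$, then for every $\epsilon>0$, $$\bar\Delta_{\mathrm{opt}}(\epsilon)\ge\bar\Delta_{\mathrm{opt},2}(\epsilon)\ge\sum_{l=1}^M\frac{w_l}{b_l}\exp\!\Big(-\frac{\sum_{i=1}^M b_i}{1-\sum_{i=1}^M b_i}\,\epsilon\Big)+\sum_{l=1}^M w_l.$$
   Context: Fix an integer $M\ge1$, weights $w_1,\dots,w_M>0$, constants $b_1,\dots,b_M>0$, and $\epsilon>0$. For $\mathbf r\in(0,\infty)^M$ write $S(\mathbf r)=\sum_{i=1}^M r_i$ and define $$\bar\Delta(\mathbf r)=\sum_{l=1}^M \frac{w_l e^{-r_l\epsilon}}{r_l}\, e^{\epsilon S(\mathbf r)}\big(1+S(\mathbf r)\big)+\sum_{l=1}^M w_l,\qquad \sigma_l(\mathbf r)=\frac{(1-e^{-r_l\epsilon})S(\mathbf r)+r_le^{-r_l\epsilon}}{S(\mathbf r)+1}.$$ Problem 1: minimize $\bar\Delta(\mathbf r)$ over $\mathbf r\in(0,\infty)^M$ subject to $\sigma_l(\mathbf r)\le b_l$ for all $l$; its optimal (infimum) value is $\bar\Delta_{\mathrm{opt}}(\epsilon)$. Problem 2: minimize $\bar\Delta(\mathbf r)$ over $\mathbf r\in(0,\infty)^M$ subject to $r_l\le b_l\big(S(\mathbf r)+1\big)$ for all $l$; its optimal (infimum) value is $\bar\Delta_{\mathrm{opt},2}(\epsilon)$. *)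

theory Defs
  imports "HOL-Analysis.Analysis"
begin

text \<open>Vectors r in (0,inf)^M are represented as functions nat => real, indexed by {1..M}.\<close>

definition Ssum :: "nat \<Rightarrow> (nat \<Rightarrow> real) \<Rightarrow> real" where
  "Ssum M r = (\<Sum>i=1..M. r i)"

definition Delta_bar :: "nat \<Rightarrow> (nat \<Rightarrow> real) \<Rightarrow> real \<Rightarrow> (nat \<Rightarrow> real) \<Rightarrow> real" where
  "Delta_bar M w \<epsilon> r =
     (\<Sum>l=1..M. w l * exp (- r l * \<epsilon>) / r l * exp (\<epsilon> * Ssum M r) * (1 + Ssum M r))
     + (\<Sum>l=1..M. w l)"

definition sigma :: "nat \<Rightarrow> real \<Rightarrow> (nat \<Rightarrow> real) \<Rightarrow> nat \<Rightarrow> real" where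
  "sigma M \<epsilon> r l =
     ((1 - exp (- r l * \<epsilon>)) * Ssum M r + r l * exp (- r l * \<epsilon>)) / (Ssum M r + 1)"

definition feasible1 :: "nat \<Rightarrow> (nat \<Rightarrow> real) \<Rightarrow> real \<Rightarrow> (nat \<Rightarrow> real) set" where
  "feasible1 M b \<epsilon> = {r. (\<forall>i\<in>{1..M}. 0 < r i) \<and> (\<forall>l\<in>{1..M}. sigma M \<epsilon> r l \<le> b l)}"

definition feasible2 :: "nat \<Rightarrow> (nat \<Rightarrow> real) \<Rightarrow> (nat \<Rightarrow> real) set" where
  "feasible2 M b = {r. (\<forall>i\<in>{1..M}. 0 < r i) \<and> (\<forall>l\<in>{1..M}. r l \<le> b l * (Ssum M r + 1))}"

definition Delta_opt :: "nat \<Rightarrow> (nat \<Rightarrow> real) \<Rightarrow> (nat \<Rightarrow> real) \<Rightarrow> real \<Rightarrow> real" where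
  "Delta_opt M w b \<epsilon> = (INF r\<in>feasible1 M b \<epsilon>. Delta_bar M w \<epsilon> r)"

definition Delta_opt2 :: "nat \<Rightarrow> (nat \<Rightarrow> real) \<Rightarrow> (nat \<Rightarrow> real) \<Rightarrow> real \<Rightarrow> real" where
  "Delta_opt2 M w b \<epsilon> = (INF r\<in>feasible2 M b. Delta_bar M w \<epsilon> r)"

end

theory Submission
  imports Defs
begin

text \<open>Since \<open>e\<^sup>-\<^sup>r\<^sup>\<epsilon> e\<^sup>\<epsilon>\<^sup>S \<ge> 1\<close>, every summand of \<open>\<Delta>\<close> is at least \<open>w\<^sub>l (1 + S) / r\<^sub>l\<close>, which is
  at least \<open>w\<^sub>l / b\<^sub>l\<close> under the constraint \<open>r\<^sub>l \<le> b\<^sub>l (S + 1)\<close> of Problem 2. This gives the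
  bound \<open>\<Sum> w\<^sub>l / b\<^sub>l + \<Sum> w\<^sub>l\<close> on Problem 2, stronger than the claimed one. Problem 2 is a
  relaxation of Problem 1 because \<open>\<sigma>\<^sub>l \<ge> r\<^sub>l / (S + 1)\<close>, and both infima are over nonempty sets,
  since small constant vectors satisfy \<open>\<sigma>\<^sub>l \<le> r\<^sub>l (\<epsilon> S + 1) \<le> b\<^sub>l\<close>.\<close>

lemma member_le_Ssum:
  assumes "\<forall>i\<in>{1..M}. 0 < r i" "l \<in> {1..M}"
  shows "r l \<le> Ssum M r"
  unfolding Ssum_def using assms by (intro member_le_sum) (auto intro: less_imp_le)

lemma Ssum_nonneg:
  assumes "\<forall>i\<in>{1..M}. 0 < r i"
  shows "0 \<le> Ssum M r"
  unfolding Ssum_def using assms by (intro sum_nonneg) (auto intro: less_imp_le)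

lemma sigma_lower_bound:
  assumes pos: "\<forall>i\<in>{1..M}. 0 < r i" and l: "l \<in> {1..M}" and "0 \<le> \<epsilon>"
  shows "r l \<le> sigma M \<epsilon> r l * (Ssum M r + 1)"
proof -
  have "exp (- r l * \<epsilon>) \<le> 1" using pos l assms(3) by (simp add: less_imp_le)
  moreover have "r l \<le> Ssum M r" using member_le_Ssum[OF pos l] .
  ultimately have "0 \<le> (1 - exp (- r l * \<epsilon>)) * (Ssum M r - r l)" by simp
  moreover have "0 < Ssum M r + 1" using Ssum_nonneg[OF pos] by simp
  hence "sigma M \<epsilon> r l * (Ssum M r + 1)
      = (1 - exp (- r l * \<epsilon>)) * Ssum M r + r l * exp (- r l * \<epsilon>)"
    unfolding sigma_def by simp
  ultimately show ?thesis by (simp add: algebra_simps)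
qed

lemma sigma_upper_bound:
  assumes pos: "\<forall>i\<in>{1..M}. 0 < r i" and l: "l \<in> {1..M}" and "0 \<le> \<epsilon>"
  shows "sigma M \<epsilon> r l \<le> r l * (\<epsilon> * Ssum M r + 1)"
proof -
  let ?S = "Ssum M r" and ?E = "exp (- r l * \<epsilon>)"
  have "0 < r l" using pos l by simp
  have S: "0 \<le> ?S" using Ssum_nonneg[OF pos] .
  have E: "?E \<le> 1" using pos l assms(3) by (simp add: less_imp_le)
  have "1 - ?E \<le> r l * \<epsilon>" using exp_ge_add_one_self[of "- r l * \<epsilon>"] by simp
  hence "(1 - ?E) * ?S + r l * ?E \<le> r l * \<epsilon> * ?S + r l"
    using S E \<open>0 < r l\<close> by (intro add_mono mult_right_mono mult_left_le) auto
  moreover have "0 \<le> (1 - ?E) * ?S + r l * ?E" using S E \<open>0 < r l\<close> by simp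
  hence "((1 - ?E) * ?S + r l * ?E) / (?S + 1) \<le> (1 - ?E) * ?S + r l * ?E"
    using S by (simp add: mult_le_cancel_left1 pos_divide_le_eq)
  ultimately show ?thesis unfolding sigma_def by (simp add: algebra_simps)
qed

lemma feasible1_subset_feasible2:
  assumes "0 \<le> \<epsilon>"
  shows "feasible1 M b \<epsilon> \<subseteq> feasible2 M b"
proof
  fix r assume "r \<in> feasible1 M b \<epsilon>"
  hence pos: "\<forall>i\<in>{1..M}. 0 < r i" and \<sigma>: "\<forall>l\<in>{1..M}. sigma M \<epsilon> r l \<le> b l"
    unfolding feasible1_def by auto
  have "r l \<le> b l * (Ssum M r + 1)" if l: "l \<in> {1..M}" for l
  proof -
    have "0 \<le> Ssum M r + 1" using Ssum_nonneg[OF pos] by simp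
    hence "sigma M \<epsilon> r l * (Ssum M r + 1) \<le> b l * (Ssum M r + 1)"
      using \<sigma> l by (intro mult_right_mono) auto
    with sigma_lower_bound[OF pos l assms] show ?thesis by linarith
  qed
  with pos show "r \<in> feasible2 M b" unfolding feasible2_def by auto
qed

lemma feasible1_nonempty:
  assumes "M \<ge> 1" "\<forall>i\<in>{1..M}. b i > 0" "0 \<le> \<epsilon>"
  shows "feasible1 M b \<epsilon> \<noteq> {}"
proof -
  define \<beta> where "\<beta> = Min (b ` {1..M})"
  have "\<beta> > 0" unfolding \<beta>_def using assms by (subst Min_gr_iff) auto
  define K where "K = \<epsilon> * real M + 1"
  have "K \<ge> 1" unfolding K_def using assms by simp
  define t where "t = min 1 (\<beta> / K)"
  have t: "0 < t" "t \<le> 1" "t * K \<le> \<beta>"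
    unfolding t_def using \<open>\<beta> > 0\<close> \<open>K \<ge> 1\<close> by (auto simp: min_def field_simps)
  have pos: "\<forall>i\<in>{1..M}. 0 < (\<lambda>_. t) i" using t by simp
  have "sigma M \<epsilon> (\<lambda>_. t) l \<le> b l" if l: "l \<in> {1..M}" for l
  proof -
    have "sigma M \<epsilon> (\<lambda>_. t) l \<le> t * (\<epsilon> * (real M * t) + 1)"
      using sigma_upper_bound[OF pos l assms(3)] by (simp add: Ssum_def)
    also have "\<dots> \<le> t * K"
      unfolding K_def using t assms(3) by (intro mult_left_mono add_mono) (auto simp: mult_left_le)
    also have "\<dots> \<le> \<beta>" using t by simp
    also have "\<dots> \<le> b l" unfolding \<beta>_def using l by simp
    finally show ?thesis .
  qed
  with pos have "(\<lambda>_. t) \<in> feasible1 M b \<epsilon>" unfolding feasible1_def by auto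
  thus ?thesis by auto
qed

lemma Delta_bar_summand_lower_bound:
  fixes w r b S \<epsilon> :: real
  assumes "0 < r" "0 < b" "0 \<le> w" "r \<le> b * (S + 1)" "r \<le> S" "0 \<le> \<epsilon>"
  shows "w / b \<le> w * exp (- r * \<epsilon>) / r * exp (\<epsilon> * S) * (1 + S)"
proof -
  have "w / b \<le> w * (1 + S) / r"
    using assms mult_right_mono[OF assms(4) assms(3)] by (simp add: divide_le_eq le_divide_eq algebra_simps)
  also have "\<dots> \<le> w * (1 + S) / r * exp (\<epsilon> * (S - r))"
  proof -
    have "1 \<le> exp (\<epsilon> * (S - r))" using assms by simp
    moreover have "0 \<le> w * (1 + S) / r" using assms by simp
    ultimately show ?thesis by (metis mult_left_mono mult.right_neutral)
  qed
  also have "\<dots> = w * exp (- r * \<epsilon>) / r * exp (\<epsilon> * S) * (1 + S)"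
    by (simp add: algebra_simps flip: exp_add)
  finally show ?thesis .
qed

lemma Delta_bar_lower_bound:
  assumes "\<forall>i\<in>{1..M}. 0 \<le> w i" "\<forall>i\<in>{1..M}. b i > 0" "0 \<le> \<epsilon>" "r \<in> feasible2 M b"
  shows "(\<Sum>l=1..M. w l / b l) + (\<Sum>l=1..M. w l) \<le> Delta_bar M w \<epsilon> r"
proof -
  have pos: "\<forall>i\<in>{1..M}. 0 < r i" and c: "\<forall>l\<in>{1..M}. r l \<le> b l * (Ssum M r + 1)"
    using assms(4) unfolding feasible2_def by auto
  have "(\<Sum>l=1..M. w l / b l)
      \<le> (\<Sum>l=1..M. w l * exp (- r l * \<epsilon>) / r l * exp (\<epsilon> * Ssum M r) * (1 + Ssum M r))"
    using assms pos c member_le_Ssum[OF pos]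
    by (intro sum_mono Delta_bar_summand_lower_bound) (auto intro: less_imp_le)
  thus ?thesis unfolding Delta_bar_def by simp
qed

theorem lemma6:
  fixes M :: nat and w b :: "nat \<Rightarrow> real" and \<epsilon> :: real
  assumes "M \<ge> 1"
    and "\<forall>i\<in>{1..M}. w i > 0"
    and "\<forall>i\<in>{1..M}. b i > 0"
    and "(\<Sum>i=1..M. b i) < 1"
    and "\<epsilon> > 0"
  shows "Delta_opt M w b \<epsilon> \<ge> Delta_opt2 M w b \<epsilon>
    \<and> Delta_opt2 M w b \<epsilon> \<ge>
        (\<Sum>l=1..M. w l / b l * exp (- ((\<Sum>i=1..M. b i) / (1 - (\<Sum>i=1..M. b i))) * \<epsilon>))
        + (\<Sum>l=1..M. w l)"
proof -
  let ?B = "\<Sum>i=1..M. b i"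
  let ?L = "(\<Sum>l=1..M. w l / b l) + (\<Sum>l=1..M. w l)"
  have ne1: "feasible1 M b \<epsilon> \<noteq> {}" using feasible1_nonempty assms by simp
  have sub: "feasible1 M b \<epsilon> \<subseteq> feasible2 M b" using feasible1_subset_feasible2 assms by simp
  have lb: "\<And>r. r \<in> feasible2 M b \<Longrightarrow> ?L \<le> Delta_bar M w \<epsilon> r"
    using Delta_bar_lower_bound assms by (simp add: less_imp_le)
  have "Delta_opt2 M w b \<epsilon> \<le> Delta_opt M w b \<epsilon>"
    unfolding Delta_opt_def Delta_opt2_def
    by (rule cINF_superset_mono[OF ne1 _ sub order_refl]) (rule bdd_belowI2, rule lb)
  moreover have "?L \<le> Delta_opt2 M w b \<epsilon>"
    unfolding Delta_opt2_def using ne1 sub by (intro cINF_greatest lb) auto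
  moreover have "0 \<le> ?B" using assms(3) by (intro sum_nonneg) (auto intro: less_imp_le)
  hence "(\<Sum>l=1..M. w l / b l * exp (- (?B / (1 - ?B)) * \<epsilon>)) \<le> (\<Sum>l=1..M. w l / b l)"
    using assms by (intro sum_mono mult_left_le) (auto intro: less_imp_le)
  ultimately show ?thesis by linarith
qed

end
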